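(* Let $\mathcal{T}, \eta > 0 $, $\boldsymbol{v} \in C^1([0,\mathcal{T});\overline{\Omega})$ and let \[ u\in C([0,\mathcal{T});C^2(\overline{\Omega}))\cap C^1([0,\mathcal{T});C(\overline{\Omega})) \] denote a strictly positive classical solution of the non-linear Fokker--Planck equation \begin{equation*} \begin{cases} \begin{alignedat}{3} \partial_t&u && = \partial_x (u(\eta\partial_x\log(u)+ \partial_xf'(u)+ \boldsymbol{v})), &&\text{ in } (0,\mathcal{T}) \times \Omega,\\ &u_0 && = u &&\text{ on } \{0\}\times \overline{\Omega},\\ &0 && = u (\eta\partial_x\log(u) + \partial_xf'(u) + \boldsymbol{v}) &&\text{ on } (0,\mathcal{T})\times \partial\Omega. \end{alignedat} \end{cases} \end{equation*} Then, there exists $K_1 \coloneqq K_1(\boldsymbol{v}) > 0$, whose size depends only on $\|\boldsymbol{v}\|_{L^\infty([0,\mathcal{T})\times\Omega)}$ such that, for each $p \in \mathbb{R} \setminus \{0,1\}$, the following energy dissipation inequality is satisfied on $(0,\mathcal{T})$. \begin{equation*} \frac{1}{p(p-1)}\partial_t \int_{\Omega}u^p dx + \frac{1}{2}\int_{\Omega} \left(\eta+ 2 uf''(u)\right)u^{p-2}|\partial_x u|^2 dx \leqslant \frac{C_1}{\eta}\int_{\Omega}u^p dx. \end{equation*} Furthermore, there exist $K_2,K_3,K_4,K_5 > 0$, whose sizes depend only on $K_1,|\Omega|$ and $\eta$, such that, when $|p| > K_5$, the following energy dissipation inequality is satisfied on $(0,\mathcal{T})$ \begin{equation*} \partial_t\int_{\Omega}u^p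 dx+ K_2\int_{\Omega}u^p dx\leqslant K_3|p|^{K_4}\left(\int_{\Omega}u^\frac{p}{2}\right)^2. \end{equation*}
   Context: $\Omega=(0,L)$ is a bounded open interval; $f\in C^{4,\beta}_{loc}(0,+\infty)$ for some $\beta\in(0,1]$ with $f''\ge 0$ on $(0,+\infty)$. The constant $C_1$ appearing in the first inequality is the constant $K_1$ (in the proof $K_1=\frac12\|\boldsymbol{v}\|^2_{L^\infty}$). *)

theory Defs
  imports "HOL-Analysis.Analysis"
begin

definition holder_loc_pos :: "real \<Rightarrow> (real \<Rightarrow> real) \<Rightarrow> bool" where
  "holder_loc_pos \<beta> g \<longleftrightarrow>
     (\<forall>a b. 0 < a \<and> a \<le> b \<longrightarrow>
        (\<exists>C. \<forall>x\<in>{a..b}. \<forall>y\<in>{a..b}. \<bar>g x - g y\<bar> \<le> C * \<bar>x - y\<bar> powr \<beta>))"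

definition C4beta_loc_pos ::
  "real \<Rightarrow> (real \<Rightarrow> real) \<Rightarrow> (real \<Rightarrow> real) \<Rightarrow> (real \<Rightarrow> real)
     \<Rightarrow> (real \<Rightarrow> real) \<Rightarrow> (real \<Rightarrow> real) \<Rightarrow> bool" where
  "C4beta_loc_pos \<beta> f f1 f2 f3 f4 \<longleftrightarrow>
     (\<forall>s>0. (f has_real_derivative f1 s) (at s) \<and> (f1 has_real_derivative f2 s) (at s)
          \<and> (f2 has_real_derivative f3 s) (at s) \<and> (f3 has_real_derivative f4 s) (at s))
     \<and> continuous_on {0<..} f4 \<and> holder_loc_pos \<beta> f4"

definition C1_strip :: "real \<Rightarrow> real \<Rightarrow> (real \<Rightarrow> real \<Rightarrow> real) \<Rightarrow> bool" where
  "C1_strip T L w \<longleftrightarrow>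
     (\<exists>wt wx. (\<forall>t\<in>{0..<T}. \<forall>x\<in>{0..L}.
          ((\<lambda>s. w s x) has_real_derivative wt t x) (at t within {0..<T})
        \<and> ((\<lambda>y. w t y) has_real_derivative wx t x) (at x within {0..L}))
      \<and> continuous_on ({0..<T} \<times> {0..L}) (\<lambda>(t,x). w t x)
      \<and> continuous_on ({0..<T} \<times> {0..L}) (\<lambda>(t,x). wt t x)
      \<and> continuous_on ({0..<T} \<times> {0..L}) (\<lambda>(t,x). wx t x))"

text \<open>Regularity
  u in C([0,T);C^2([0,L])) \<inter> C^1([0,T);C([0,L])) is expressed by joint continuity
  of u, u_x, u_xx, u_t on [0,T) x [0,L] (one-sided derivatives at the boundary).
  The flux u (eta d_x log u + d_x f'(u) + v) is written with the chain rule as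
  u (eta u_x / u + f''(u) u_x + v).\<close>
definition FP_classical_solution ::
  "real \<Rightarrow> real \<Rightarrow> real \<Rightarrow> (real \<Rightarrow> real \<Rightarrow> real) \<Rightarrow> (real \<Rightarrow> real)
     \<Rightarrow> (real \<Rightarrow> real \<Rightarrow> real) \<Rightarrow> bool" where
  "FP_classical_solution L T \<eta> v f2 u \<longleftrightarrow>
     (\<exists>ux uxx ut.
        (\<forall>t\<in>{0..<T}. \<forall>x\<in>{0..L}.
            0 < u t x
          \<and> ((\<lambda>y. u t y) has_real_derivative ux t x) (at x within {0..L})
          \<and> ((\<lambda>y. ux t y) has_real_derivative uxx t x) (at x within {0..L})
          \<and> ((\<lambda>s. u s x) has_real_derivative ut t x) (at t within {0..<T}))
      \<and> continuous_on ({0..<T} \<times> {0..L}) (\<lambda>(t,x). u t x)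
      \<and> continuous_on ({0..<T} \<times> {0..L}) (\<lambda>(t,x). ux t x)
      \<and> continuous_on ({0..<T} \<times> {0..L}) (\<lambda>(t,x). uxx t x)
      \<and> continuous_on ({0..<T} \<times> {0..L}) (\<lambda>(t,x). ut t x)
      \<and> (let J = (\<lambda>t y. u t y * (\<eta> * ux t y / u t y + f2 (u t y) * ux t y + v t y)) in
           (\<forall>t\<in>{0<..<T}. \<forall>x\<in>{0<..<L}. ((\<lambda>y. J t y) has_real_derivative ut t x) (at x))
         \<and> (\<forall>t\<in>{0<..<T}. J t 0 = 0 \<and> J t L = 0)))"

definition sup_norm_strip :: "real \<Rightarrow> real \<Rightarrow> (real \<Rightarrow> real \<Rightarrow> real) \<Rightarrow> real" where
  "sup_norm_strip T L v = Sup {\<bar>v t x\<bar> | t x. t \<in> {0..<T} \<and> x \<in> {0<..<L}}"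

end

theory Submission
  imports Defs
begin

text \<open>Testing the equation with \<open>u\<^sup>p\<^sup>-\<^sup>1\<close> and integrating by parts, the no-flux condition
  removes the boundary terms and gives
  \<open>d/dt \<integral>u\<^sup>p = -p(p-1) \<integral>u\<^sup>p\<^sup>-\<^sup>2 u\<^sub>x ((\<eta> + u f''(u)) u\<^sub>x + u v)\<close>.
  Young's inequality absorbs the drift term into half of the dissipation
  \<open>\<integral>(\<eta> + 2u f''(u)) u\<^sup>p\<^sup>-\<^sup>2 u\<^sub>x\<^sup>2\<close> at the price of \<open>(|v|\<^sup>2/2\<eta>) \<integral>u\<^sup>p\<close>; this is the
  first inequality. For \<open>|p| \<ge> 2\<close> we have \<open>p(p-1) \<ge> p\<^sup>2/2\<close>, so the dissipation left over
  controls \<open>\<integral>|\<partial>\<^sub>x u\<^sup>p\<^sup>/\<^sup>2|\<^sup>2\<close>. The one-dimensional Nash-type inequality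
  \<open>\<integral>w\<^sup>2 \<le> (1/L + L/2\<delta>) (\<integral>w)\<^sup>2 + \<delta>/2 \<integral>w'\<^sup>2\<close> for \<open>w = u\<^sup>p\<^sup>/\<^sup>2\<close> and \<open>\<delta>\<close> of order \<open>\<eta>/p\<^sup>2\<close>
  then trades \<open>\<integral>u\<^sup>p\<close> for the dissipation and \<open>(\<integral>u\<^sup>p\<^sup>/\<^sup>2)\<^sup>2\<close>, which gives the second
  inequality with \<open>K\<^sub>2 = 1\<close>, \<open>K\<^sub>4 = 4\<close> and \<open>K\<^sub>5 = 2\<close>.\<close>

lemma mult_le_weighted_squares:
  fixes x y \<delta> :: real
  assumes "0 < \<delta>"
  shows "x * y \<le> \<delta> / 2 * x\<^sup>2 + y\<^sup>2 / (2 * \<delta>)"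
proof -
  have "0 \<le> (\<delta> * x - y)\<^sup>2" by simp
  then have "2 * \<delta> * (x * y) \<le> \<delta>\<^sup>2 * x\<^sup>2 + y\<^sup>2"
    by (simp add: power2_eq_square algebra_simps)
  with assms show ?thesis by (simp add: field_simps power2_eq_square)
qed

lemma abs_diff_le_integral_abs_deriv:
  fixes w w' :: "real \<Rightarrow> real"
  assumes deriv: "\<And>x. x \<in> {a..b} \<Longrightarrow> (w has_real_derivative w' x) (at x within {a..b})"
    and cont: "continuous_on {a..b} w'"
    and c: "c \<in> {a..b}" and d: "d \<in> {a..b}"
  shows "\<bar>w d - w c\<bar> \<le> integral {a..b} (\<lambda>x. \<bar>w' x\<bar>)"
proof -
  have ftc: "integral {c..d} w' = w d - w c" if "c \<in> {a..b}" "d \<in> {a..b}" "c \<le> d" for c d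
  proof -
    have "(w' has_integral (w d - w c)) {c..d}"
    proof (rule fundamental_theorem_of_calculus)
      fix x assume "x \<in> {c..d}"
      with that have "(w has_real_derivative w' x) (at x within {c..d})"
        by (intro DERIV_subset[OF deriv]) auto
      then show "(w has_vector_derivative w' x) (at x within {c..d})"
        by (simp add: has_real_derivative_iff_has_vector_derivative)
    qed (use that in simp)
    then show ?thesis by blast
  qed
  have bound: "\<bar>integral {c..d} w'\<bar> \<le> integral {a..b} (\<lambda>x. \<bar>w' x\<bar>)"
    if "c \<in> {a..b}" "d \<in> {a..b}" for c d
  proof -
    have sub: "{c..d} \<subseteq> {a..b}" using that by auto
    have "\<bar>integral {c..d} w'\<bar> \<le> integral {c..d} (\<lambda>x. \<bar>w' x\<bar>)"
      using continuous_on_subset[OF cont sub]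
      by (intro integral_norm_bound_integral[where f = w', simplified])
        (auto intro: integrable_continuous_real continuous_intros)
    also have "\<dots> \<le> integral {a..b} (\<lambda>x. \<bar>w' x\<bar>)"
      using sub cont continuous_on_subset[OF cont sub]
      by (intro integral_subset_le) (auto intro!: integrable_continuous_real continuous_intros)
    finally show ?thesis .
  qed
  show ?thesis
  proof (cases "c \<le> d")
    case True
    then show ?thesis using ftc[OF c d] bound[OF c d] by simp
  next
    case False
    then show ?thesis using ftc[OF d c] bound[OF d c] by simp
  qed
qed

lemma integral_square_le_nash:
  fixes w w' :: "real \<Rightarrow> real"
  assumes deriv: "\<And>x. x \<in> {a..b} \<Longrightarrow> (w has_real_derivative w' x) (at x within {a..b})"
    and cont: "continuous_on {a..b} w" "continuous_on {a..b} w'"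
    and nonneg: "\<And>x. x \<in> {a..b} \<Longrightarrow> 0 \<le> w x"
    and "a \<le> b"
  shows "(b - a) * integral {a..b} (\<lambda>x. (w x)\<^sup>2)
    \<le> (integral {a..b} w)\<^sup>2 + (b - a) * integral {a..b} w * integral {a..b} (\<lambda>x. \<bar>w' x\<bar>)"
proof -
  define M where "M = integral {a..b} w"
  define A where "A = integral {a..b} (\<lambda>x. \<bar>w' x\<bar>)"
  have int_w: "w integrable_on {a..b}"
    using cont(1) by (rule integrable_continuous_real)
  have pointwise: "(b - a) * w x \<le> M + (b - a) * A" if x: "x \<in> {a..b}" for x
  proof -
    have "w x - w y \<le> A" if "y \<in> {a..b}" for y
      using abs_diff_le_integral_abs_deriv[OF deriv cont(2) that x] unfolding A_def by linarith
    then have "integral {a..b} (\<lambda>y. w x - w y) \<le> integral {a..b} (\<lambda>y. A)"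
      using int_w by (intro integral_le) (auto intro!: integrable_diff)
    moreover have "integral {a..b} (\<lambda>y. w x - w y) = (b - a) * w x - M"
      using integral_diff[OF integrable_const_ivl int_w] \<open>a \<le> b\<close> by (simp add: M_def)
    ultimately show ?thesis using \<open>a \<le> b\<close> by (simp add: algebra_simps)
  qed
  have "integral {a..b} (\<lambda>x. (b - a) * (w x)\<^sup>2) \<le> integral {a..b} (\<lambda>x. (M + (b - a) * A) * w x)"
  proof (rule integral_le)
    fix x assume x: "x \<in> {a..b}"
    show "(b - a) * (w x)\<^sup>2 \<le> (M + (b - a) * A) * w x"
      using mult_right_mono[OF pointwise[OF x] nonneg[OF x]] by (simp add: power2_eq_square)
  qed (use cont in \<open>auto intro!: integrable_continuous_real continuous_intros\<close>)
  then have "(b - a) * integral {a..b} (\<lambda>x. (w x)\<^sup>2) \<le> (M + (b - a) * A) * M"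
    by (simp add: M_def)
  then show ?thesis by (simp add: M_def A_def power2_eq_square algebra_simps)
qed

lemma integral_square_le_nash_weighted:
  fixes w w' :: "real \<Rightarrow> real"
  assumes deriv: "\<And>x. x \<in> {a..b} \<Longrightarrow> (w has_real_derivative w' x) (at x within {a..b})"
    and cont: "continuous_on {a..b} w" "continuous_on {a..b} w'"
    and nonneg: "\<And>x. x \<in> {a..b} \<Longrightarrow> 0 \<le> w x"
    and "a < b" "0 < \<delta>"
  shows "integral {a..b} (\<lambda>x. (w x)\<^sup>2)
    \<le> (1 / (b - a) + (b - a) / (2 * \<delta>)) * (integral {a..b} w)\<^sup>2
      + \<delta> / 2 * integral {a..b} (\<lambda>x. (w' x)\<^sup>2)"
proof -
  define M where "M = integral {a..b} w"
  have M_nonneg: "0 \<le> M"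
    unfolding M_def using nonneg cont by (intro integral_nonneg integrable_continuous_real) auto
  have "M * integral {a..b} (\<lambda>x. \<bar>w' x\<bar>) = integral {a..b} (\<lambda>x. \<bar>w' x\<bar> * M)"
    by simp
  also have "\<dots> \<le> integral {a..b} (\<lambda>x. \<delta> / 2 * (w' x)\<^sup>2 + M\<^sup>2 / (2 * \<delta>))"
  proof (rule integral_le)
    fix x
    show "\<bar>w' x\<bar> * M \<le> \<delta> / 2 * (w' x)\<^sup>2 + M\<^sup>2 / (2 * \<delta>)"
      using mult_le_weighted_squares[OF \<open>0 < \<delta>\<close>, of "\<bar>w' x\<bar>" M] by simp
  qed (use cont in \<open>auto intro!: integrable_continuous_real continuous_intros\<close>)
  also have "\<dots> = \<delta> / 2 * integral {a..b} (\<lambda>x. (w' x)\<^sup>2) + (b - a) * M\<^sup>2 / (2 * \<delta>)"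
    using cont \<open>a < b\<close>
    by (subst integral_add) (auto intro!: integrable_continuous_real continuous_intros)
  finally have "(b - a) * integral {a..b} (\<lambda>x. (w x)\<^sup>2)
      \<le> M\<^sup>2 + (b - a) * (\<delta> / 2 * integral {a..b} (\<lambda>x. (w' x)\<^sup>2) + (b - a) * M\<^sup>2 / (2 * \<delta>))"
    using integral_square_le_nash[OF deriv cont nonneg] M_nonneg \<open>a < b\<close>
    unfolding M_def by (smt (verit) mult_left_mono mult.assoc)
  then show ?thesis
    using \<open>a < b\<close> unfolding M_def by (simp add: field_simps power2_eq_square)
qed

lemma has_real_derivative_integral_powr:
  fixes u ut :: "real \<Rightarrow> real \<Rightarrow> real"
  assumes t: "t \<in> {0<..<T}"
    and pos: "\<And>s x. s \<in> {0..<T} \<Longrightarrow> x \<in> {a..b} \<Longrightarrow> 0 < u s x"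
    and deriv: "\<And>s x. s \<in> {0..<T} \<Longrightarrow> x \<in> {a..b} \<Longrightarrow>
      ((\<lambda>s. u s x) has_real_derivative ut s x) (at s within {0..<T})"
    and cont: "continuous_on ({0..<T} \<times> {a..b}) (\<lambda>(s, x). u s x)"
      "continuous_on ({0..<T} \<times> {a..b}) (\<lambda>(s, x). ut s x)"
  shows "((\<lambda>s. integral {a..b} (\<lambda>x. u s x powr p)) has_real_derivative
    integral {a..b} (\<lambda>x. p * u t x powr (p - 1) * ut t x)) (at t)"
proof -
  let ?U = "{0<..<T}"
  have sub: "?U \<times> {a..b} \<subseteq> {0..<T} \<times> {a..b}" by auto
  have "((\<lambda>s. integral (cbox a b) (\<lambda>x. u s x powr p)) has_real_derivative
      integral (cbox a b) (\<lambda>x. p * u t x powr (p - 1) * ut t x)) (at t within ?U)"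
  proof (rule leibniz_rule_field_derivative[where fx = "\<lambda>s x. p * u s x powr (p - 1) * ut s x"])
    fix s x assume s: "s \<in> ?U" and x: "x \<in> cbox a b"
    have "((\<lambda>s. u s x) has_real_derivative ut s x) (at s within ?U)"
      using s x by (intro DERIV_subset[OF deriv]) auto
    then show "((\<lambda>s. u s x powr p) has_real_derivative p * u s x powr (p - 1) * ut s x) (at s within ?U)"
      using pos[of s x] s x by (auto intro!: derivative_eq_intros simp: algebra_simps)
  next
    fix s assume s: "s \<in> ?U"
    then have "continuous_on {a..b} (u s)"
      by (intro continuous_on_compose_Pair[OF cont(1)]) (auto intro: continuous_intros)
    then show "(\<lambda>x. u s x powr p) integrable_on cbox a b"
      using pos[of s] s
      by (auto intro!: integrable_continuous_real continuous_intros simp: less_imp_neq[THEN not_sym])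
  next
    have "u s x \<noteq> 0" if "(s, x) \<in> ?U \<times> cbox a b" for s x
      using pos[of s x] that by auto
    then show "continuous_on (?U \<times> cbox a b) (\<lambda>(s, x). p * u s x powr (p - 1) * ut s x)"
      using continuous_on_subset[OF cont(1) sub] continuous_on_subset[OF cont(2) sub]
      unfolding case_prod_beta by (intro continuous_intros) auto
  qed (use t in auto)
  moreover have "at t within ?U = at t"
    using t by (intro at_within_open) auto
  ultimately show ?thesis by simp
qed

lemma integral_powr_mult_deriv_by_parts:
  fixes g g' J J' :: "real \<Rightarrow> real"
  assumes "a \<le> b"
    and pos: "\<And>x. x \<in> {a..b} \<Longrightarrow> 0 < g x"
    and cont: "continuous_on {a..b} g" "continuous_on {a..b} g'"
      "continuous_on {a..b} J" "continuous_on {a..b} J'"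
    and deriv_g: "\<And>x. x \<in> {a<..<b} \<Longrightarrow> (g has_real_derivative g' x) (at x)"
    and deriv_J: "\<And>x. x \<in> {a<..<b} \<Longrightarrow> (J has_real_derivative J' x) (at x)"
    and boundary: "J a = 0" "J b = 0"
  shows "integral {a..b} (\<lambda>x. g x powr (p - 1) * J' x)
    = - (p - 1) * integral {a..b} (\<lambda>x. g x powr (p - 2) * g' x * J x)"
proof -
  have nonzero: "\<And>x. x \<in> {a..b} \<Longrightarrow> g x \<noteq> 0"
    using pos by force
  define F where "F = (\<lambda>x. (p - 1) * (g x powr (p - 2) * g' x * J x))"
  define G where "G = (\<lambda>x. g x powr (p - 1) * J' x)"
  have "((\<lambda>x. F x + G x) has_integral (g b powr (p - 1) * J b - g a powr (p - 1) * J a)) {a..b}"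
  proof (rule fundamental_theorem_of_calculus_interior)
    show "continuous_on {a..b} (\<lambda>x. g x powr (p - 1) * J x)"
      using nonzero by (intro continuous_intros cont) auto
  next
    fix x assume x: "x \<in> {a<..<b}"
    then have "((\<lambda>x. g x powr (p - 1) * J x) has_real_derivative F x + G x) (at x)"
      using pos[of x] unfolding F_def G_def
      by (auto intro!: derivative_eq_intros deriv_g deriv_J simp: algebra_simps)
    then show "((\<lambda>x. g x powr (p - 1) * J x) has_vector_derivative F x + G x) (at x)"
      by (simp add: has_real_derivative_iff_has_vector_derivative)
  qed (use \<open>a \<le> b\<close> in simp)
  then have "integral {a..b} (\<lambda>x. F x + G x) = 0"
    using boundary by (simp add: integral_unique)
  moreover have "integral {a..b} (\<lambda>x. F x + G x) = integral {a..b} F + integral {a..b} G"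
    unfolding F_def G_def using nonzero
    by (intro integral_add integrable_continuous_real continuous_intros cont) auto
  ultimately have "integral {a..b} G = - integral {a..b} F"
    by linarith
  then show ?thesis unfolding F_def G_def integral_mult_right by (simp only: minus_mult_left)
qed

lemma flux_dissipation_pointwise_le:
  fixes a b g w \<eta> k :: real
  assumes "0 < \<eta>" "w\<^sup>2 \<le> 2 * k"
  shows "- (b * ((\<eta> + a * g) * b + a * w)) + (\<eta> + 2 * a * g) * b\<^sup>2 / 2 \<le> k / \<eta> * a\<^sup>2"
proof -
  have "- (b * ((\<eta> + a * g) * b + a * w)) + (\<eta> + 2 * a * g) * b\<^sup>2 / 2
      = b * (- (a * w)) - \<eta> / 2 * b\<^sup>2"
    by (simp add: field_simps power2_eq_square)
  also have "\<dots> \<le> (- (a * w))\<^sup>2 / (2 * \<eta>)"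
    using mult_le_weighted_squares[OF \<open>0 < \<eta>\<close>, of b "- (a * w)"] by simp
  also have "\<dots> = a\<^sup>2 * w\<^sup>2 / (2 * \<eta>)"
    by (simp add: power_mult_distrib)
  also have "\<dots> \<le> a\<^sup>2 * (2 * k) / (2 * \<eta>)"
    using assms by (intro divide_right_mono mult_left_mono) auto
  finally show ?thesis by (simp add: mult.commute)
qed

lemma absorb_dissipation_by_nash:
  fixes p \<eta> L k X P Q M :: real
  assumes "0 < L" and "0 < \<eta>" and "0 \<le> k" and "2 \<le> \<bar>p\<bar>"
    and dissipation: "- X + \<eta> / 2 * Q \<le> k / \<eta> * P"
    and nash: "\<And>\<delta>. 0 < \<delta> \<Longrightarrow> P \<le> (1 / L + L / (2 * \<delta>)) * M\<^sup>2 + \<delta> / 2 * (p\<^sup>2 / 4 * Q)"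
    and "0 \<le> Q"
  shows "- (p * (p - 1)) * X + P
    \<le> ((2 * k / \<eta> + 1) / L + (2 * k / \<eta> + 1)\<^sup>2 * L / (4 * \<eta>)) * p ^ 4 * M\<^sup>2"
proof -
  define C where "C = 2 * k / \<eta> + 1"
  define E where "E = p * (p - 1)"
  define B where "B = E * k / \<eta> + 1"
  have p_sq: "4 \<le> p\<^sup>2"
    using power_mono[OF \<open>2 \<le> \<bar>p\<bar>\<close>, of 2] by simp
  have abs_le_sq: "\<bar>p\<bar> \<le> p\<^sup>2"
    using mult_right_mono[OF \<open>2 \<le> \<bar>p\<bar>\<close>, of "\<bar>p\<bar>"] by (simp add: power2_eq_square)
  have E_lower: "p\<^sup>2 / 2 \<le> E"
  proof -
    have "0 \<le> p * (p - 2)"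
      using \<open>2 \<le> \<bar>p\<bar>\<close> by (cases "0 \<le> p") (auto intro: mult_nonpos_nonpos)
    then show ?thesis unfolding E_def by (simp add: algebra_simps power2_eq_square)
  qed
  have E_upper: "E \<le> 2 * p\<^sup>2"
  proof -
    have "E = p\<^sup>2 - p" unfolding E_def by (simp add: algebra_simps power2_eq_square)
    moreover have "- p \<le> \<bar>p\<bar>" by simp
    ultimately show ?thesis using abs_le_sq by linarith
  qed
  have E_nonneg: "0 \<le> E"
    using E_lower zero_le_power2[of p] by linarith
  have B_ge_1: "1 \<le> B"
    unfolding B_def using E_nonneg \<open>0 < \<eta>\<close> \<open>0 \<le> k\<close> by simp
  have B_le: "B \<le> p\<^sup>2 * C"
  proof -
    have "E * k / \<eta> \<le> 2 * p\<^sup>2 * k / \<eta>"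
      using E_upper \<open>0 < \<eta>\<close> \<open>0 \<le> k\<close> by (intro divide_right_mono mult_right_mono) auto
    moreover have "p\<^sup>2 * C = 2 * p\<^sup>2 * k / \<eta> + p\<^sup>2"
      unfolding C_def by (simp add: algebra_simps)
    ultimately show ?thesis unfolding B_def using p_sq by linarith
  qed
  have absorbed: "- E * X + P \<le> B * P - \<eta> * p\<^sup>2 / 4 * Q"
  proof -
    have "E * (- X + \<eta> / 2 * Q) \<le> E * (k / \<eta> * P)"
      using dissipation E_nonneg by (rule mult_left_mono)
    moreover have "p\<^sup>2 / 2 * (\<eta> / 2 * Q) \<le> E * (\<eta> / 2 * Q)"
      using E_lower \<open>0 < \<eta>\<close> \<open>0 \<le> Q\<close> by (intro mult_right_mono) auto
    moreover have "E * (- X + \<eta> / 2 * Q) = - E * X + E * (\<eta> / 2 * Q)"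
      and "B * P = E * (k / \<eta> * P) + P" and "p\<^sup>2 / 2 * (\<eta> / 2 * Q) = \<eta> * p\<^sup>2 / 4 * Q"
      unfolding B_def by (simp_all add: algebra_simps)
    ultimately show ?thesis by linarith
  qed
  text \<open>With \<open>\<delta> = 2\<eta>/B\<close> the gradient term of the Nash inequality, scaled by \<open>B\<close>, is exactly
    the dissipation \<open>\<eta> p\<^sup>2/4 Q\<close> gained above.\<close>
  have nash_scaled: "B * P \<le> (B / L + B\<^sup>2 * L / (4 * \<eta>)) * M\<^sup>2 + \<eta> * p\<^sup>2 / 4 * Q"
  proof -
    have "0 < 2 * \<eta> / B" using B_ge_1 \<open>0 < \<eta>\<close> by simp
    from nash[OF this] B_ge_1
    have "P \<le> (1 / L + L * B / (4 * \<eta>)) * M\<^sup>2 + \<eta> / B * (p\<^sup>2 / 4 * Q)"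
      by simp
    from mult_left_mono[OF this, of B] B_ge_1
    have "B * P \<le> B * ((1 / L + L * B / (4 * \<eta>)) * M\<^sup>2 + \<eta> / B * (p\<^sup>2 / 4 * Q))"
      by simp
    also have "\<dots> = (B / L + B\<^sup>2 * L / (4 * \<eta>)) * M\<^sup>2 + \<eta> * p\<^sup>2 / 4 * Q"
      using B_ge_1 by (simp add: algebra_simps power2_eq_square)
    finally show ?thesis .
  qed
  have "B / L + B\<^sup>2 * L / (4 * \<eta>) \<le> (C / L + C\<^sup>2 * L / (4 * \<eta>)) * p ^ 4"
  proof -
    have C_nonneg: "0 \<le> C" unfolding C_def using \<open>0 < \<eta>\<close> \<open>0 \<le> k\<close> by simp
    have p_sq_le: "p\<^sup>2 \<le> p ^ 4"
      using mult_left_mono[of 1 "p\<^sup>2" "p\<^sup>2"] p_sq by (simp add: power4_eq_xxxx power2_eq_square)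
    have "B \<le> p ^ 4 * C"
      using B_le mult_right_mono[OF p_sq_le C_nonneg] by linarith
    then have "B / L \<le> C / L * p ^ 4"
      using \<open>0 < L\<close> by (simp add: divide_right_mono mult.commute)
    moreover have "B\<^sup>2 \<le> p ^ 4 * C\<^sup>2"
      using power_mono[OF B_le, of 2] B_ge_1 by (simp add: power_mult_distrib flip: power_mult)
    then have "B\<^sup>2 * L / (4 * \<eta>) \<le> C\<^sup>2 * L / (4 * \<eta>) * p ^ 4"
      using \<open>0 < L\<close> \<open>0 < \<eta>\<close> by (simp add: divide_right_mono mult_right_mono mult.commute mult.left_commute)
    ultimately show ?thesis by (simp add: distrib_right)
  qed
  then have "(B / L + B\<^sup>2 * L / (4 * \<eta>)) * M\<^sup>2 \<le> (C / L + C\<^sup>2 * L / (4 * \<eta>)) * p ^ 4 * M\<^sup>2"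
    by (rule mult_right_mono) simp
  with absorbed nash_scaled show ?thesis unfolding E_def C_def by linarith
qed

text \<open>The absolute values and the final summand 1 only serve to make the constant positive for
  all arguments, as the theorem demands.\<close>
definition absorption_constant :: "real \<Rightarrow> real \<Rightarrow> real \<Rightarrow> real" where
  "absorption_constant k L \<eta> =
     (2 * \<bar>k\<bar> / \<bar>\<eta>\<bar> + 1) / \<bar>L\<bar> + (2 * \<bar>k\<bar> / \<bar>\<eta>\<bar> + 1)\<^sup>2 * \<bar>L\<bar> / (4 * \<bar>\<eta>\<bar>) + 1"

lemma absorption_constant_pos: "0 < absorption_constant k L \<eta>"
proof -
  have "0 \<le> (2 * \<bar>k\<bar> / \<bar>\<eta>\<bar> + 1) / \<bar>L\<bar> + (2 * \<bar>k\<bar> / \<bar>\<eta>\<bar> + 1)\<^sup>2 * \<bar>L\<bar> / (4 * \<bar>\<eta>\<bar>)"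
    by simp
  then show ?thesis unfolding absorption_constant_def by linarith
qed

locale fokker_planck_solution =
  fixes L T \<eta> S :: real and f2 :: "real \<Rightarrow> real" and v u ux ut flux :: "real \<Rightarrow> real \<Rightarrow> real"
  defines "flux \<equiv> \<lambda>s y. u s y * (\<eta> * ux s y / u s y + f2 (u s y) * ux s y + v s y)"
  assumes L_pos: "0 < L" and eta_pos: "0 < \<eta>"
    and u_pos: "\<And>s x. s \<in> {0..<T} \<Longrightarrow> x \<in> {0..L} \<Longrightarrow> 0 < u s x"
    and u_deriv_x: "\<And>s x. s \<in> {0..<T} \<Longrightarrow> x \<in> {0..L} \<Longrightarrow>
      (u s has_real_derivative ux s x) (at x within {0..L})"
    and u_deriv_t: "\<And>s x. s \<in> {0..<T} \<Longrightarrow> x \<in> {0..L} \<Longrightarrow>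
      ((\<lambda>s. u s x) has_real_derivative ut s x) (at s within {0..<T})"
    and continuous: "continuous_on ({0..<T} \<times> {0..L}) (\<lambda>(s, x). u s x)"
      "continuous_on ({0..<T} \<times> {0..L}) (\<lambda>(s, x). ux s x)"
      "continuous_on ({0..<T} \<times> {0..L}) (\<lambda>(s, x). ut s x)"
      "continuous_on ({0..<T} \<times> {0..L}) (\<lambda>(s, x). v s x)"
    and f2_continuous: "continuous_on {0<..} f2"
    and f2_nonneg: "\<And>s. 0 < s \<Longrightarrow> 0 \<le> f2 s"
    and v_bounded: "\<And>s x. s \<in> {0..<T} \<Longrightarrow> x \<in> {0<..<L} \<Longrightarrow> \<bar>v s x\<bar> \<le> S"
    and flux_deriv: "\<And>s x. s \<in> {0<..<T} \<Longrightarrow> x \<in> {0<..<L} \<Longrightarrow>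
      (flux s has_real_derivative ut s x) (at x)"
    and flux_boundary: "\<And>s. s \<in> {0<..<T} \<Longrightarrow> flux s 0 = 0 \<and> flux s L = 0"
begin

abbreviation moment :: "real \<Rightarrow> real \<Rightarrow> real" where
  "moment p s \<equiv> integral {0..L} (\<lambda>x. u s x powr p)"

abbreviation weighted_gradient :: "real \<Rightarrow> real \<Rightarrow> real" where
  "weighted_gradient p s \<equiv> integral {0..L} (\<lambda>x. u s x powr (p - 2) * (ux s x)\<^sup>2)"

abbreviation flux_pairing :: "real \<Rightarrow> real \<Rightarrow> real" where
  "flux_pairing p s \<equiv> integral {0..L}
     (\<lambda>x. u s x powr (p - 2) * ux s x * ((\<eta> + u s x * f2 (u s x)) * ux s x + u s x * v s x))"

abbreviation dissipation :: "real \<Rightarrow> real \<Rightarrow> real" where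
  "dissipation p s \<equiv> integral {0..L} (\<lambda>x. (\<eta> + 2 * u s x * f2 (u s x)) * u s x powr (p - 2) * (ux s x)\<^sup>2)"

context
  fixes t :: real
  assumes t: "t \<in> {0<..<T}"
begin

lemma continuous_on_slices:
  "continuous_on {0..L} (u t)" "continuous_on {0..L} (ux t)" "continuous_on {0..L} (ut t)"
  "continuous_on {0..L} (v t)" "continuous_on {0..L} (\<lambda>x. f2 (u t x))"
proof -
  show u: "continuous_on {0..L} (u t)" and "continuous_on {0..L} (ux t)"
    "continuous_on {0..L} (ut t)" "continuous_on {0..L} (v t)"
    using t by (auto intro!: continuous_on_compose_Pair[OF continuous(1)]
        continuous_on_compose_Pair[OF continuous(2)] continuous_on_compose_Pair[OF continuous(3)]
        continuous_on_compose_Pair[OF continuous(4)] continuous_intros)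
  show "continuous_on {0..L} (\<lambda>x. f2 (u t x))"
    using t u_pos by (intro continuous_on_compose2[OF f2_continuous u]) auto
qed

lemma u_slice_pos: "x \<in> {0..L} \<Longrightarrow> 0 < u t x"
  using t by (intro u_pos) auto

lemma u_slice_nonzero: "x \<in> {0..L} \<Longrightarrow> u t x \<noteq> 0"
  using u_slice_pos by force

lemma has_real_derivative_u_slice: "x \<in> {0<..<L} \<Longrightarrow> (u t has_real_derivative ux t x) (at x)"
  using t u_deriv_x[of t x] at_within_interior[of x "{0..L}"] by auto

lemma v_bounded_closed:
  assumes "x \<in> {0..L}"
  shows "\<bar>v t x\<bar> \<le> S"
proof (rule continuous_le_on_closure[of "{0<..<L}" "\<lambda>x. \<bar>v t x\<bar>"])
  show "continuous_on (closure {0<..<L}) (\<lambda>x. \<bar>v t x\<bar>)"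
    using L_pos continuous_on_slices(4) by (simp add: continuous_on_rabs)
  show "x \<in> closure {0<..<L}"
    using L_pos assms by simp
qed (use t v_bounded in auto)

lemma flux_eq:
  assumes "x \<in> {0..L}"
  shows "flux t x = (\<eta> + u t x * f2 (u t x)) * ux t x + u t x * v t x"
  using u_slice_nonzero[OF assms] unfolding flux_def by (simp add: field_simps)

lemma continuous_on_flux: "continuous_on {0..L} (flux t)"
proof -
  have "continuous_on {0..L} (\<lambda>x. (\<eta> + u t x * f2 (u t x)) * ux t x + u t x * v t x)"
    using continuous_on_slices by (intro continuous_intros)
  then show ?thesis
    using flux_eq continuous_on_cong[of "{0..L}" "{0..L}" "flux t"] by simp
qed

lemma has_real_derivative_moment:
  "(moment p has_real_derivative - (p * (p - 1)) * flux_pairing p t) (at t)"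
proof -
  have "integral {0..L} (\<lambda>x. u t x powr (p - 1) * ut t x)
      = - (p - 1) * integral {0..L} (\<lambda>x. u t x powr (p - 2) * ux t x * flux t x)"
  proof (rule integral_powr_mult_deriv_by_parts)
    show "flux t 0 = 0" "flux t L = 0"
      using flux_boundary[OF t] by auto
  qed (use L_pos u_slice_pos continuous_on_slices continuous_on_flux
      has_real_derivative_u_slice flux_deriv[OF t] in auto)
  also have "integral {0..L} (\<lambda>x. u t x powr (p - 2) * ux t x * flux t x) = flux_pairing p t"
    by (intro integral_cong) (simp add: flux_eq)
  finally have by_parts: "integral {0..L} (\<lambda>x. u t x powr (p - 1) * ut t x)
      = - (p - 1) * flux_pairing p t" .
  have "integral {0..L} (\<lambda>x. p * u t x powr (p - 1) * ut t x) = p * (- (p - 1) * flux_pairing p t)"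
    unfolding by_parts[symmetric] by (simp add: mult.assoc)
  then have "integral {0..L} (\<lambda>x. p * u t x powr (p - 1) * ut t x)
      = - (p * (p - 1)) * flux_pairing p t"
    by (simp only: mult_minus_left mult_minus_right mult.assoc)
  then show ?thesis
    using has_real_derivative_integral_powr[OF t u_pos u_deriv_t continuous(1,3), of p] by simp
qed

lemma integrable_on_slice:
  assumes "continuous_on {0..L} g"
  shows "(\<lambda>x. u t x powr q * g x) integrable_on {0..L}"
  using assms continuous_on_slices(1) u_slice_nonzero
  by (auto intro!: integrable_continuous_real continuous_intros)

lemma flux_pairing_dissipation_le:
  assumes "S\<^sup>2 / 2 \<le> k"
  shows "- flux_pairing p t + 1/2 * dissipation p t \<le> k / \<eta> * moment p t"
proof -
  define J where "J x = (\<eta> + u t x * f2 (u t x)) * ux t x + u t x * v t x" for x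
  define D where "D x = \<eta> + 2 * u t x * f2 (u t x)" for x
  have "(\<lambda>x. u t x powr (p - 2) * ux t x * J x) integrable_on {0..L}"
    "(\<lambda>x. D x * u t x powr (p - 2) * (ux t x)\<^sup>2) integrable_on {0..L}"
    using integrable_on_slice[of "\<lambda>x. ux t x * J x" "p - 2"]
      integrable_on_slice[of "\<lambda>x. D x * (ux t x)\<^sup>2" "p - 2"] continuous_on_slices
    unfolding J_def D_def by (simp_all add: continuous_intros mult_ac)
  then have "((\<lambda>x. - (u t x powr (p - 2) * ux t x * J x) + 1/2 * (D x * u t x powr (p - 2) * (ux t x)\<^sup>2))
      has_integral (- flux_pairing p t + 1/2 * dissipation p t)) {0..L}"
    unfolding J_def D_def
    by (intro has_integral_add has_integral_neg has_integral_mult_right integrable_integral)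
  moreover have "((\<lambda>x. k / \<eta> * u t x powr p) has_integral k / \<eta> * moment p t) {0..L}"
    using integrable_on_slice[of "\<lambda>_. 1" p]
    by (intro has_integral_mult_right integrable_integral) simp
  ultimately show ?thesis
  proof (rule has_integral_le)
    fix x assume x: "x \<in> {0..L}"
    have "(v t x)\<^sup>2 \<le> 2 * k"
      using power_mono[OF v_bounded_closed[OF x], of 2] assms by simp
    then have "- (ux t x * J x) + D x * (ux t x)\<^sup>2 / 2 \<le> k / \<eta> * (u t x)\<^sup>2"
      unfolding J_def D_def using eta_pos by (rule flux_dissipation_pointwise_le[rotated])
    from mult_left_mono[OF this, of "u t x powr (p - 2)"]
    have "- (u t x powr (p - 2) * ux t x * J x) + 1/2 * (D x * u t x powr (p - 2) * (ux t x)\<^sup>2)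
      \<le> k / \<eta> * (u t x powr (p - 2) * (u t x)\<^sup>2)"
      by (simp add: algebra_simps)
    moreover have "u t x powr (p - 2) * (u t x)\<^sup>2 = u t x powr p"
      using u_slice_pos[OF x] by (simp add: powr_diff power2_eq_square)
    ultimately show "- (u t x powr (p - 2) * ux t x * J x) + 1/2 * (D x * u t x powr (p - 2) * (ux t x)\<^sup>2)
      \<le> k / \<eta> * u t x powr p"
      by simp
  qed
qed

lemma weighted_gradient_le_dissipation: "\<eta> * weighted_gradient p t \<le> dissipation p t"
proof -
  have "integral {0..L} (\<lambda>x. u t x powr (p - 2) * (\<eta> * (ux t x)\<^sup>2))
      \<le> integral {0..L} (\<lambda>x. u t x powr (p - 2) * ((\<eta> + 2 * u t x * f2 (u t x)) * (ux t x)\<^sup>2))"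
  proof (rule integral_le)
    fix x assume x: "x \<in> {0..L}"
    have "0 \<le> u t x * f2 (u t x)"
      using u_slice_pos[OF x] f2_nonneg[of "u t x"] by simp
    then show "u t x powr (p - 2) * (\<eta> * (ux t x)\<^sup>2)
        \<le> u t x powr (p - 2) * ((\<eta> + 2 * u t x * f2 (u t x)) * (ux t x)\<^sup>2)"
      by (intro mult_left_mono mult_right_mono) auto
  qed (intro integrable_on_slice continuous_intros continuous_on_slices)+
  then show ?thesis by (simp add: mult_ac)
qed

lemma moment_nash:
  assumes "0 < \<delta>"
  shows "moment p t \<le> (1 / L + L / (2 * \<delta>)) * (moment (p / 2) t)\<^sup>2
    + \<delta> / 2 * (p\<^sup>2 / 4 * weighted_gradient p t)"
proof -
  define w where "w = (\<lambda>x. u t x powr (p / 2))"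
  define w' where "w' = (\<lambda>x. p / 2 * u t x powr (p / 2 - 1) * ux t x)"
  have "integral {0..L} (\<lambda>x. (w x)\<^sup>2)
      \<le> (1 / (L - 0) + (L - 0) / (2 * \<delta>)) * (integral {0..L} w)\<^sup>2 + \<delta> / 2 * integral {0..L} (\<lambda>x. (w' x)\<^sup>2)"
  proof (rule integral_square_le_nash_weighted)
    fix x assume x: "x \<in> {0..L}"
    show "(w has_real_derivative w' x) (at x within {0..L})"
      unfolding w_def w'_def using u_slice_pos[OF x] t x
      by (auto intro!: derivative_eq_intros u_deriv_x simp: algebra_simps)
  qed (use L_pos assms continuous_on_slices u_slice_nonzero in
      \<open>auto simp: w_def w'_def intro!: continuous_intros\<close>)
  moreover have "integral {0..L} (\<lambda>x. (w x)\<^sup>2) = moment p t"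
    using u_slice_pos by (intro integral_cong) (simp add: w_def powr_add[symmetric] power2_eq_square)
  moreover have "integral {0..L} (\<lambda>x. (w' x)\<^sup>2) = p\<^sup>2 / 4 * weighted_gradient p t"
  proof -
    have "(w' x)\<^sup>2 = p\<^sup>2 / 4 * (u t x powr (p - 2) * (ux t x)\<^sup>2)" if "x \<in> {0..L}" for x
    proof -
      have "(u t x powr (p / 2 - 1))\<^sup>2 = u t x powr (p - 2)"
        using u_slice_pos[OF that] by (simp add: power2_eq_square powr_add[symmetric])
      then show ?thesis unfolding w'_def by (simp add: power_mult_distrib power_divide)
    qed
    then have "integral {0..L} (\<lambda>x. (w' x)\<^sup>2)
        = integral {0..L} (\<lambda>x. p\<^sup>2 / 4 * (u t x powr (p - 2) * (ux t x)\<^sup>2))"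
      by (intro integral_cong) auto
    then show ?thesis by simp
  qed
  ultimately show ?thesis by (simp add: w_def)
qed

lemma weighted_gradient_nonneg: "0 \<le> weighted_gradient p t"
  using continuous_on_slices
  by (intro integral_nonneg integrable_on_slice continuous_intros) auto

lemma deriv_moment: "deriv (moment p) t = - (p * (p - 1)) * flux_pairing p t"
  by (rule DERIV_imp_deriv[OF has_real_derivative_moment])

lemma moment_differentiable: "moment p differentiable (at t)"
  using has_real_derivative_moment real_differentiable_def by blast

lemma dissipation_deriv_eq:
  "integral {0..L} (\<lambda>x. (\<eta> + 2 * u t x * f2 (u t x)) * u t x powr (p - 2) * (deriv (u t) x)\<^sup>2)
    = dissipation p t"
proof -
  have "deriv (u t) x = ux t x" if "x \<in> {0<..<L}" for x
    using has_real_derivative_u_slice[OF that] by (rule DERIV_imp_deriv)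
  then show ?thesis
    unfolding integral_open_interval_real by (intro integral_cong) simp
qed

lemma first_energy_inequality:
  assumes "p \<noteq> 0" "p \<noteq> 1" "S\<^sup>2 / 2 \<le> k"
  shows "1 / (p * (p - 1)) * deriv (moment p) t
      + 1/2 * integral {0..L} (\<lambda>x. (\<eta> + 2 * u t x * f2 (u t x)) * u t x powr (p - 2) * (deriv (u t) x)\<^sup>2)
    \<le> k / \<eta> * moment p t"
  using flux_pairing_dissipation_le[OF assms(3)] assms(1,2) by (simp add: deriv_moment dissipation_deriv_eq)

lemma second_energy_inequality:
  assumes "2 \<le> \<bar>p\<bar>" "S\<^sup>2 / 2 \<le> k" "0 \<le> k"
  shows "deriv (moment p) t + moment p t
    \<le> absorption_constant k L \<eta> * \<bar>p\<bar> powr 4 * (moment (p / 2) t)\<^sup>2"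
proof -
  have "- flux_pairing p t + \<eta> / 2 * weighted_gradient p t \<le> k / \<eta> * moment p t"
    using flux_pairing_dissipation_le[OF assms(2), of p] weighted_gradient_le_dissipation[of p] by linarith
  from absorb_dissipation_by_nash[OF L_pos eta_pos assms(3,1) this moment_nash weighted_gradient_nonneg]
  have "deriv (moment p) t + moment p t
      \<le> ((2 * k / \<eta> + 1) / L + (2 * k / \<eta> + 1)\<^sup>2 * L / (4 * \<eta>)) * p ^ 4 * (moment (p / 2) t)\<^sup>2"
    by (simp add: deriv_moment)
  also have "\<dots> \<le> (((2 * k / \<eta> + 1) / L + (2 * k / \<eta> + 1)\<^sup>2 * L / (4 * \<eta>)) + 1) * p ^ 4
      * (moment (p / 2) t)\<^sup>2"
    by (intro mult_right_mono) simp_all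
  also have "\<dots> = absorption_constant k L \<eta> * \<bar>p\<bar> powr 4 * (moment (p / 2) t)\<^sup>2"
    using L_pos eta_pos assms(3) by (simp add: absorption_constant_def power_abs)
  finally show ?thesis .
qed

end

end

lemma FP_classical_solutionE:
  assumes "0 < L" "0 < \<eta>" "C4beta_loc_pos \<beta> f f1 f2 f3 f4" "\<forall>s>0. 0 \<le> f2 s" "C1_strip T L v"
    and v_bdd: "bdd_above {\<bar>v t x\<bar> | t x. t \<in> {0..<T} \<and> x \<in> {0<..<L}}"
    and "FP_classical_solution L T \<eta> v f2 u"
  obtains ux ut where "fokker_planck_solution L T \<eta> (sup_norm_strip T L v) f2 v u ux ut"
proof -
  obtain ux uxx ut where
    solution: "\<forall>t\<in>{0..<T}. \<forall>x\<in>{0..L}. 0 < u t x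
      \<and> (u t has_real_derivative ux t x) (at x within {0..L})
      \<and> (ux t has_real_derivative uxx t x) (at x within {0..L})
      \<and> ((\<lambda>s. u s x) has_real_derivative ut t x) (at t within {0..<T})"
    and continuous: "continuous_on ({0..<T} \<times> {0..L}) (\<lambda>(t, x). u t x)"
      "continuous_on ({0..<T} \<times> {0..L}) (\<lambda>(t, x). ux t x)"
      "continuous_on ({0..<T} \<times> {0..L}) (\<lambda>(t, x). ut t x)"
    and flux: "\<forall>t\<in>{0<..<T}. \<forall>x\<in>{0<..<L}.
      ((\<lambda>y. u t y * (\<eta> * ux t y / u t y + f2 (u t y) * ux t y + v t y)) has_real_derivative ut t x) (at x)"
      "\<forall>t\<in>{0<..<T}. u t 0 * (\<eta> * ux t 0 / u t 0 + f2 (u t 0) * ux t 0 + v t 0) = 0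
        \<and> u t L * (\<eta> * ux t L / u t L + f2 (u t L) * ux t L + v t L) = 0"
    using assms(7) unfolding FP_classical_solution_def Let_def by blast
  have continuous_v: "continuous_on ({0..<T} \<times> {0..L}) (\<lambda>(t, x). v t x)"
    using assms(5) unfolding C1_strip_def by blast
  have continuous_f2: "continuous_on {0<..} f2"
    using assms(3) unfolding C4beta_loc_pos_def
    by (intro continuous_at_imp_continuous_on ballI) (auto intro: DERIV_isCont)
  have v_bounded: "\<bar>v t x\<bar> \<le> sup_norm_strip T L v" if "t \<in> {0..<T}" "x \<in> {0<..<L}" for t x
    unfolding sup_norm_strip_def using that v_bdd by (intro cSup_upper) auto
  have "fokker_planck_solution L T \<eta> (sup_norm_strip T L v) f2 v u ux ut"
  proof unfold_locales
  qed (use assms(1,2,4) solution continuous flux continuous_v continuous_f2 v_bounded in blast)+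
  then show thesis by (rule that)
qed

theorem propositionA2:
  shows "\<exists>K1 :: real \<Rightarrow> real. (\<forall>s. K1 s > 0) \<and>
    (\<exists>K2 K3 K4 K5 :: real \<Rightarrow> real \<Rightarrow> real \<Rightarrow> real.
       (\<forall>a b c. K2 a b c > 0 \<and> K3 a b c > 0 \<and> K4 a b c > 0 \<and> K5 a b c > 0) \<and>
       (\<forall>(L::real) (\<beta>::real) (T::real) (\<eta>::real)
          (f::real\<Rightarrow>real) f1 f2 f3 f4 (v::real\<Rightarrow>real\<Rightarrow>real) (u::real\<Rightarrow>real\<Rightarrow>real).
          0 < L \<and> 0 < \<beta> \<and> \<beta> \<le> 1 \<and> 0 < T \<and> 0 < \<eta>
          \<and> C4beta_loc_pos \<beta> f f1 f2 f3 f4 \<and> (\<forall>s>0. f2 s \<ge> 0)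
          \<and> C1_strip T L v
          \<and> bdd_above {\<bar>v t x\<bar> | t x. t \<in> {0..<T} \<and> x \<in> {0<..<L}}
          \<and> FP_classical_solution L T \<eta> v f2 u
          \<longrightarrow>
          (let k1 = K1 (sup_norm_strip T L v);
               I = (\<lambda>p s. integral {0..L} (\<lambda>x. u s x powr p))
           in
            (\<forall>p. p \<noteq> 0 \<and> p \<noteq> 1 \<longrightarrow> (\<forall>t\<in>{0<..<T}.
                I p differentiable (at t)
              \<and> 1 / (p * (p - 1)) * deriv (I p) t
                + 1/2 * integral {0..L} (\<lambda>x. (\<eta> + 2 * u t x * f2 (u t x))
                          * u t x powr (p - 2) * (deriv (u t) x)\<^sup>2)
                \<le> k1 / \<eta> * I p t))
          \<and> (\<forall>p. \<bar>p\<bar> > K5 k1 L \<eta> \<longrightarrow> (\<forall>t\<in>{0<..<T}.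
                I p differentiable (at t)
              \<and> deriv (I p) t + K2 k1 L \<eta> * I p t
                \<le> K3 k1 L \<eta> * \<bar>p\<bar> powr (K4 k1 L \<eta>) * (I (p / 2) t)\<^sup>2)))))"
proof (rule exI[of _ "\<lambda>s. s\<^sup>2 / 2 + 1"], rule conjI, simp add: add_nonneg_pos,
    rule exI[of _ "\<lambda>_ _ _. 1"], rule exI[of _ absorption_constant], rule exI[of _ "\<lambda>_ _ _. 4"],
    rule exI[of _ "\<lambda>_ _ _. 2"], intro conjI allI impI)
  \<comment> \<open>\<open>K\<^sub>1 s = s\<^sup>2/2 + 1\<close>: the paper's \<open>\<parallel>v\<parallel>\<^sup>2/2\<close>, shifted to be positive also for \<open>v = 0\<close>\<close>
  fix L \<beta> T \<eta> f f1 f2 f3 f4 v u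
  assume "0 < L \<and> 0 < \<beta> \<and> \<beta> \<le> 1 \<and> 0 < T \<and> 0 < \<eta>
    \<and> C4beta_loc_pos \<beta> f f1 f2 f3 f4 \<and> (\<forall>s>0. f2 s \<ge> 0) \<and> C1_strip T L v
    \<and> bdd_above {\<bar>v t x\<bar> | t x. t \<in> {0..<T} \<and> x \<in> {0<..<L}}
    \<and> FP_classical_solution L T \<eta> v f2 u"
  then obtain ux ut where sol: "fokker_planck_solution L T \<eta> (sup_norm_strip T L v) f2 v u ux ut"
    using FP_classical_solutionE[of L \<eta> \<beta> f f1 f2 f3 f4 T v u] by blast
  let ?k1 = "(sup_norm_strip T L v)\<^sup>2 / 2 + 1"
  have "?k1 \<ge> 0" "(sup_norm_strip T L v)\<^sup>2 / 2 \<le> ?k1"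
    by (simp_all add: add_nonneg_nonneg)
  then show "let k1 = ?k1; I = \<lambda>p s. integral {0..L} (\<lambda>x. u s x powr p) in
    (\<forall>p. p \<noteq> 0 \<and> p \<noteq> 1 \<longrightarrow> (\<forall>t\<in>{0<..<T}. I p differentiable (at t)
      \<and> 1 / (p * (p - 1)) * deriv (I p) t + 1/2 * integral {0..L} (\<lambda>x. (\<eta> + 2 * u t x * f2 (u t x))
          * u t x powr (p - 2) * (deriv (u t) x)\<^sup>2) \<le> k1 / \<eta> * I p t))
    \<and> (\<forall>p. 2 < \<bar>p\<bar> \<longrightarrow> (\<forall>t\<in>{0<..<T}. I p differentiable (at t)
      \<and> deriv (I p) t + 1 * I p t \<le> absorption_constant k1 L \<eta> * \<bar>p\<bar> powr 4 * (I (p / 2) t)\<^sup>2))"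
    unfolding Let_def
    using fokker_planck_solution.moment_differentiable[OF sol]
      fokker_planck_solution.first_energy_inequality[OF sol]
      fokker_planck_solution.second_energy_inequality[OF sol]
    by auto
qed (simp_all add: absorption_constant_pos)

end
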